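(* Let $f$ be a $C^3$ incompressible velocity field ($\operatorname{tr}\nabla f\equiv0$) on $D\subset\mathbb{R}\times\mathbb{R}^3$, and let $(t_0,x)\in D$ with $d_f:=\det\nabla f(t_0,x)\neq0$. Then there exists $T_{\min}>0$ such that for every $T\in(0,T_{\min})$ the point $x$ is mesohyperbolic on $[t_0,t_0+T]$, i.e. no eigenvalue of $\nabla\psi_T(x)$ lies on the unit circle.
   Context: $\phi(t,t_0,x)$ is the solution of $\dot x=f(t,x)$ with $x(t_0)=x$; the time-$T$ map is $\psi_T(x)=\phi(t_0+T,t_0,x)$. The mesochronic velocity is $\tilde f_T(x)=\frac1T\int_{t_0}^{t_0+T}f(\tau,\phi(\tau,t_0,x))\,d\tau$, with $\nabla\psi_T=\mathrm{Id}+T\nabla\tilde f_T$ and $\nabla\tilde f_T(x)\to\nabla f(t_0,x)$ as $T\to0^+$. A point is mesohyperbolic on $[t_0,t_0+T]$ if no eigenvalue of $\nabla\psi_T(x)$ has modulus $1$. *)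

theory Defs
  imports "HOL-Analysis.Analysis"
begin

definition C1_on :: "'a::real_normed_vector set \<Rightarrow> ('a \<Rightarrow> 'b::real_normed_vector) \<Rightarrow> bool" where
  "C1_on D g \<longleftrightarrow> (\<exists>g'. (\<forall>z\<in>D. (g has_derivative blinfun_apply (g' z)) (at z)) \<and> continuous_on D g')"

definition C2_on :: "'a::real_normed_vector set \<Rightarrow> ('a \<Rightarrow> 'b::real_normed_vector) \<Rightarrow> bool" where
  "C2_on D g \<longleftrightarrow> (\<exists>g'. (\<forall>z\<in>D. (g has_derivative blinfun_apply (g' z)) (at z)) \<and> C1_on D g')"

definition C3_on :: "'a::real_normed_vector set \<Rightarrow> ('a \<Rightarrow> 'b::real_normed_vector) \<Rightarrow> bool" where
  "C3_on D g \<longleftrightarrow> (\<exists>g'. (\<forall>z\<in>D. (g has_derivative blinfun_apply (g' z)) (at z)) \<and> C2_on D g')"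

definition time_map :: "(real \<Rightarrow> real \<Rightarrow> real^'n \<Rightarrow> real^'n) \<Rightarrow> real \<Rightarrow> real \<Rightarrow> real^'n \<Rightarrow> real^'n" where
  "time_map \<phi> t0 T y = \<phi> (t0 + T) t0 y"

definition complexify :: "real^'n^'n \<Rightarrow> complex^'n^'n" where
  "complexify A = (\<chi> i j. complex_of_real (A $ i $ j))"

definition is_eigenvalue :: "real^'n^'n \<Rightarrow> complex \<Rightarrow> bool" where
  "is_eigenvalue A c \<longleftrightarrow> (\<exists>v::complex^'n. v \<noteq> 0 \<and> complexify A *v v = c *s v)"

definition mesohyperbolic :: "(real \<Rightarrow> real \<Rightarrow> real^'n \<Rightarrow> real^'n) \<Rightarrow> real \<Rightarrow> real \<Rightarrow> real^'n \<Rightarrow> bool" where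
  "mesohyperbolic \<phi> t0 T x \<longleftrightarrow>
     (\<forall>c. is_eigenvalue (jacobian (time_map \<phi> t0 T) (at x)) c \<longrightarrow> cmod c \<noteq> 1)"

end

theory Submission
  imports Defs
begin

definition matrix_l1_norm :: "real^'n^'m \<Rightarrow> real" where
  "matrix_l1_norm A = (\<Sum>i\<in>UNIV. \<Sum>j\<in>UNIV. \<bar>A $ i $ j\<bar>)"

lemma matrix_l1_norm_nonneg: "0 \<le> matrix_l1_norm A"
  unfolding matrix_l1_norm_def by (auto intro!: sum_nonneg)

lemma matrix_l1_norm_scaleR: "matrix_l1_norm (c *\<^sub>R A) = \<bar>c\<bar> * matrix_l1_norm A"
  unfolding matrix_l1_norm_def by (simp add: abs_mult sum_distrib_left)

lemma complexify_mult_vector_nth: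
  "(complexify A *v v) $ i = (\<Sum>j\<in>UNIV. of_real (A $ i $ j) * v $ j)"
  by (simp add: complexify_def matrix_vector_mult_def)

lemma complexify_add: "complexify (A + B) = complexify A + complexify B"
  by (simp add: complexify_def vec_eq_iff)

lemma complexify_mat: "complexify (mat c) = mat (of_real c)"
  by (simp add: complexify_def mat_def vec_eq_iff)

lemma complexify_scaleR_mult_vector:
  "complexify (c *\<^sub>R A) *v v = of_real c *s (complexify A *v v)"
  by (simp add: vec_eq_iff complexify_mult_vector_nth sum_distrib_left algebra_simps)

lemma mat_mult_vector: "mat c *v v = c *s (v :: 'a::comm_ring_1^'n)"
  by (simp add: vec_eq_iff matrix_vector_mult_def mat_def if_distrib[where f="\<lambda>a. a * _"] sum.delta cong: if_cong)

lemma norm_vector_smult: "norm (c *s (v::complex^'n)) = cmod c * norm v"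
  unfolding norm_vec_def by (simp add: norm_mult L2_set_right_distrib)

lemma norm_complexify_mult_vector_le:
  "norm (complexify A *v v) \<le> matrix_l1_norm A * norm v"
proof -
  have "norm (complexify A *v v) \<le> (\<Sum>i\<in>UNIV. norm ((complexify A *v v) $ i))"
    unfolding norm_vec_def by (rule L2_set_le_sum) auto
  also have "\<dots> \<le> (\<Sum>i\<in>UNIV. (\<Sum>j\<in>UNIV. \<bar>A $ i $ j\<bar>) * norm v)"
  proof (rule sum_mono)
    fix i
    have "norm ((complexify A *v v) $ i) \<le> (\<Sum>j\<in>UNIV. \<bar>A $ i $ j\<bar> * norm (v $ j))"
      unfolding complexify_mult_vector_nth by (rule norm_sum[THEN order_trans]) (simp add: norm_mult)
    also have "\<dots> \<le> (\<Sum>j\<in>UNIV. \<bar>A $ i $ j\<bar> * norm v)"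
      by (intro sum_mono mult_left_mono Finite_Cartesian_Product.norm_nth_le) auto
    finally show "norm ((complexify A *v v) $ i) \<le> (\<Sum>j\<in>UNIV. \<bar>A $ i $ j\<bar>) * norm v"
      by (simp add: sum_distrib_right)
  qed
  finally show ?thesis
    by (simp add: matrix_l1_norm_def sum_distrib_right)
qed

lemma matrix_l1_norm_le_norm_blinfun:
  "matrix_l1_norm (matrix (blinfun_apply F) :: real^'n^'m) \<le> real CARD('m) * real CARD('n) * norm F"
proof -
  have "\<bar>matrix (blinfun_apply F) $ i $ j\<bar> \<le> norm F" for i j
    using component_le_onorm[of "blinfun_apply F" i j]
    by (simp add: bounded_linear.linear blinfun.bounded_linear_right norm_blinfun.rep_eq)
  then have "matrix_l1_norm (matrix (blinfun_apply F) :: real^'n^'m) \<le> (\<Sum>i\<in>(UNIV::'m set). \<Sum>j\<in>(UNIV::'n set). norm F)"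
    unfolding matrix_l1_norm_def by (intro sum_mono)
  then show ?thesis by (simp add: mult.assoc)
qed

lemma is_eigenvalue_imp_det_eq_0:
  assumes "is_eigenvalue A c"
  shows "det (complexify A - mat c) = 0"
proof (rule ccontr)
  assume "det (complexify A - mat c) \<noteq> 0"
  then have "\<exists>B. B ** (complexify A - mat c) = mat 1"
    by (simp add: invertible_det_nz[symmetric] invertible_left_inverse)
  then have "\<forall>v. (complexify A - mat c) *v v = 0 \<longrightarrow> v = 0"
    by (simp add: matrix_left_invertible_ker)
  moreover obtain v where "v \<noteq> 0" "complexify A *v v = c *s v"
    using assms unfolding is_eigenvalue_def by blast
  ultimately show False
    by (simp add: matrix_vector_mult_diff_rdistrib mat_mult_vector)
qed

lemma Re_det_complexify_minus_imaginary:
  fixes A :: "real^3^3"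
  shows "Re (det (complexify A - mat (\<i> * of_real \<omega>))) = det A - \<omega>\<^sup>2 * trace A"
  unfolding det_3 trace_def sum_3 complexify_def mat_def
  by (simp add: algebra_simps power2_eq_square)

lemma no_imaginary_eigenvalue_if_trace_zero:
  fixes A :: "real^3^3"
  assumes "trace A = 0" and "det A \<noteq> 0"
  shows "\<not> is_eigenvalue A (\<i> * of_real \<omega>)"
  using is_eigenvalue_imp_det_eq_0[of A "\<i> * of_real \<omega>"] Re_det_complexify_minus_imaginary[of A \<omega>] assms
  by auto

lemma unit_circle_shift:
  assumes "cmod (1 + of_real T * \<nu>) = 1" and "T > 0"
  shows "2 * Re \<nu> = - T * (cmod \<nu>)\<^sup>2"
proof -
  have "(1 + T * Re \<nu>)\<^sup>2 + (T * Im \<nu>)\<^sup>2 = 1"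
    using assms(1) cmod_power2[of "1 + of_real T * \<nu>"] by simp
  then have "T * (2 * Re \<nu> + T * ((Re \<nu>)\<^sup>2 + (Im \<nu>)\<^sup>2)) = 0"
    by (simp add: algebra_simps power2_eq_square)
  then have "2 * Re \<nu> + T * ((Re \<nu>)\<^sup>2 + (Im \<nu>)\<^sup>2) = 0"
    using assms(2) by simp
  then show ?thesis
    by (simp add: cmod_power2 algebra_simps)
qed

lemma imaginary_shift_lower_bound:
  fixes A :: "real^'n^'n"
  assumes "\<forall>\<omega>. \<not> is_eigenvalue A (\<i> * of_real \<omega>)"
  shows "\<exists>m>0. \<forall>\<omega> v. \<bar>\<omega>\<bar> \<le> R \<longrightarrow> m * norm v \<le> norm (complexify A *v v - (\<i> * of_real \<omega>) *s v)"
proof (cases "R < 0")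
  case True
  then show ?thesis by (auto intro: exI[of _ 1])
next
  case False
  define g where "g p = norm (complexify A *v snd p - (\<i> * of_real (fst p)) *s snd p)"
    for p :: "real \<times> (complex^'n)"
  define S where "S = {-R..R} \<times> sphere (0::complex^'n) 1"
  have "compact S" "S \<noteq> {}"
    using False by (auto simp: S_def intro!: compact_Times)
  moreover have "continuous_on S g"
    unfolding g_def vector_scalar_mult_def
    by (intro continuous_intros continuous_on_vec_lambda
        continuous_on_compose2[OF linear_continuous_on[OF matrix_vector_mul_bounded_linear]]) auto
  ultimately obtain p0 where p0: "p0 \<in> S" "\<And>p. p \<in> S \<Longrightarrow> g p0 \<le> g p"
    using continuous_attains_inf by metis
  have "g p0 \<noteq> 0"
  proof
    assume "g p0 = 0"
    moreover obtain \<omega> v where "p0 = (\<omega>, v)" "v \<noteq> 0"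
      using p0(1) by (force simp: S_def)
    ultimately show False
      using assms by (auto simp: g_def is_eigenvalue_def)
  qed
  then have m0: "g p0 > 0" by (simp add: g_def)
  have "g p0 * norm v \<le> norm (complexify A *v v - (\<i> * of_real \<omega>) *s v)" if "\<bar>\<omega>\<bar> \<le> R" for \<omega> v
  proof (cases "v = 0")
    case False
    then have "(\<omega>, v /\<^sub>R norm v) \<in> S" using that by (simp add: S_def abs_le_iff)
    then have "g p0 \<le> g (\<omega>, v /\<^sub>R norm v)" by (rule p0(2))
    also have "\<dots> = norm (complexify A *v v - (\<i> * of_real \<omega>) *s v) / norm v"
    proof -
      have "complexify A *v (r *\<^sub>R v) - c *s (r *\<^sub>R v) = r *\<^sub>R (complexify A *v v - c *s v)" for r c
        unfolding vec_eq_iff complexify_mult_vector_nth vector_scaleR_component vector_minus_component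
          vector_smult_component
        by (simp add: scaleR_conv_of_real sum_distrib_left algebra_simps)
      then show ?thesis by (simp add: g_def divide_inverse_commute)
    qed
    finally show ?thesis using False by (simp add: field_simps)
  qed simp
  with m0 show ?thesis by blast
qed

lemma unit_eigenvalue_of_perturbation:
  fixes A E M :: "real^'n^'n"
  assumes M: "M = mat 1 + T *\<^sub>R (A + E)" and T: "T > 0"
    and ev: "is_eigenvalue M c" and c: "cmod c = 1"
    and R: "matrix_l1_norm A + matrix_l1_norm E \<le> R"
  obtains \<omega> v where "v \<noteq> 0" "\<bar>\<omega>\<bar> \<le> R"
    "norm (complexify A *v v - (\<i> * of_real \<omega>) *s v) \<le> (T * R\<^sup>2 / 2 + matrix_l1_norm E) * norm v"
proof -
  obtain v where v: "v \<noteq> 0" "complexify M *v v = c *s v"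
    using ev unfolding is_eigenvalue_def by blast
  define \<nu> where "\<nu> = (c - 1) / of_real T"
  have c_eq: "c = 1 + of_real T * \<nu>"
    using T by (simp add: \<nu>_def)
  have "of_real T *s (\<nu> *s v) = of_real T *s (complexify A *v v + complexify E *v v)"
    using v(2) unfolding M c_eq complexify_add complexify_mat
    by (simp add: complexify_add matrix_vector_mult_add_rdistrib mat_mult_vector complexify_scaleR_mult_vector
        vector_sadd_rdistrib vector_add_ldistrib vector_smult_assoc)
  then have \<nu>v: "\<nu> *s v = complexify A *v v + complexify E *v v"
    using T by (simp add: vec_eq_iff mult.assoc flip: distrib_left)
  have "cmod \<nu> * norm v \<le> (matrix_l1_norm A + matrix_l1_norm E) * norm v"
    unfolding norm_vector_smult[symmetric] \<nu>v distrib_right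
    by (intro norm_triangle_le add_mono norm_complexify_mult_vector_le)
  then have \<nu>R: "cmod \<nu> \<le> R"
    using v(1) R by simp
  have Re\<nu>: "\<bar>Re \<nu>\<bar> \<le> T * R\<^sup>2 / 2"
  proof -
    have "\<bar>2 * Re \<nu>\<bar> = T * (cmod \<nu>)\<^sup>2"
      using unit_circle_shift[OF c[unfolded c_eq] T] T by simp
    also have "\<dots> \<le> T * R\<^sup>2"
      using T \<nu>R by (intro mult_left_mono power_mono) auto
    finally show ?thesis by simp
  qed
  have "complexify A *v v - (\<i> * of_real (Im \<nu>)) *s v = of_real (Re \<nu>) *s v - complexify E *v v"
    using \<nu>v unfolding vec_eq_iff by (simp add: complex_eq_iff algebra_simps)
  then have "norm (complexify A *v v - (\<i> * of_real (Im \<nu>)) *s v)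
      \<le> \<bar>Re \<nu>\<bar> * norm v + matrix_l1_norm E * norm v"
    using norm_triangle_ineq4[of "of_real (Re \<nu>) *s v" "complexify E *v v"]
      norm_complexify_mult_vector_le[of E v]
    by (simp add: norm_vector_smult)
  also have "\<dots> \<le> (T * R\<^sup>2 / 2 + matrix_l1_norm E) * norm v"
    using Re\<nu> by (simp add: distrib_right mult_right_mono del: times_divide_eq_left)
  finally have "norm (complexify A *v v - (\<i> * of_real (Im \<nu>)) *s v)
      \<le> (T * R\<^sup>2 / 2 + matrix_l1_norm E) * norm v" .
  moreover have "\<bar>Im \<nu>\<bar> \<le> R"
    using abs_Im_le_cmod[of \<nu>] \<nu>R by simp
  ultimately show thesis
    using that v(1) by blast
qed

lemma eventually_no_unit_eigenvalue:
  fixes A :: "real^'n^'n"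
  assumes "\<forall>\<omega>. \<not> is_eigenvalue A (\<i> * of_real \<omega>)"
  shows "\<exists>\<eta>>0. \<forall>\<^sub>F T in at_right 0. \<forall>M. matrix_l1_norm (M - mat 1 - T *\<^sub>R A) \<le> \<eta> * T \<longrightarrow>
           (\<forall>c. is_eigenvalue M c \<longrightarrow> cmod c \<noteq> 1)"
proof -
  define R where "R = matrix_l1_norm A + 1"
  obtain m where m: "m > 0"
    and m_le: "\<And>\<omega> v. \<bar>\<omega>\<bar> \<le> R \<Longrightarrow> m * norm v \<le> norm (complexify A *v v - (\<i> * of_real \<omega>) *s v)"
    using imaginary_shift_lower_bound[OF assms] by blast
  define \<eta> where "\<eta> = min 1 (m / 4)"
  have R_pos: "R\<^sup>2 > 0"
    using matrix_l1_norm_nonneg[of A] by (simp add: R_def add_nonneg_pos)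
  have "\<forall>M. matrix_l1_norm (M - mat 1 - T *\<^sub>R A) \<le> \<eta> * T \<longrightarrow> (\<forall>c. is_eigenvalue M c \<longrightarrow> cmod c \<noteq> 1)"
    if T: "0 < T" "T < m / R\<^sup>2" for T
  proof (intro allI impI notI)
    fix M c
    assume M: "matrix_l1_norm (M - mat 1 - T *\<^sub>R A) \<le> \<eta> * T" and "is_eigenvalue M c" "cmod c = 1"
    define E where "E = (1 / T) *\<^sub>R (M - mat 1 - T *\<^sub>R A)"
    have E: "matrix_l1_norm E \<le> \<eta>"
      using M T unfolding E_def matrix_l1_norm_scaleR by (simp add: divide_simps mult.commute)
    have "M = mat 1 + T *\<^sub>R (A + E)"
      using T by (simp add: E_def algebra_simps)
    moreover have "matrix_l1_norm A + matrix_l1_norm E \<le> R"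
      using E by (simp add: R_def \<eta>_def)
    ultimately obtain \<omega> v where "v \<noteq> 0" "\<bar>\<omega>\<bar> \<le> R"
      "norm (complexify A *v v - (\<i> * of_real \<omega>) *s v) \<le> (T * R\<^sup>2 / 2 + matrix_l1_norm E) * norm v"
      using unit_eigenvalue_of_perturbation \<open>is_eigenvalue M c\<close> \<open>cmod c = 1\<close> T(1) by blast
    with m_le have "m \<le> T * R\<^sup>2 / 2 + matrix_l1_norm E"
      by (meson order_trans mult_le_cancel_right_pos zero_less_norm_iff)
    moreover have "T * R\<^sup>2 < m"
      using T R_pos by (simp add: field_simps)
    ultimately show False
      using E m by (simp add: \<eta>_def)
  qed
  then have "\<forall>\<^sub>F T in at_right 0. \<forall>M. matrix_l1_norm (M - mat 1 - T *\<^sub>R A) \<le> \<eta> * T \<longrightarrow>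
      (\<forall>c. is_eigenvalue M c \<longrightarrow> cmod c \<noteq> 1)"
    using m R_pos unfolding eventually_at_right_field by (intro exI[of _ "m / R\<^sup>2"]) auto
  moreover have "\<eta> > 0"
    using m by (simp add: \<eta>_def)
  ultimately show ?thesis by blast
qed

lemma norm_diff_le_of_vector_derivative_bound:
  fixes g :: "real \<Rightarrow> 'b::banach"
  assumes "a \<le> b"
    and "\<And>t. t \<in> {a..b} \<Longrightarrow> (g has_vector_derivative g' t) (at t within {a..b})"
    and "\<And>t. t \<in> {a..b} \<Longrightarrow> norm (g' t) \<le> B"
  shows "norm (g b - g a) \<le> B * (b - a)"
proof -
  have "0 \<le> B"
    using assms(1) assms(3)[of a] by (auto intro: order_trans[OF norm_ge_zero])
  moreover have "(g' has_integral (g b - g a)) {a..b}"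
    using assms(1,2) by (rule fundamental_theorem_of_calculus)
  ultimately show ?thesis
    using has_integral_bound_real[OF _ finite.emptyI, of B g' "g b - g a" a b] assms(1,3) by simp
qed

text \<open>A bound on the supremum of \<open>\<bar>e\<bar>\<close> that feeds back into itself with a factor \<open>1/2\<close>
  can be absorbed; this replaces Gronwall's inequality on short intervals.\<close>
lemma norm_le_double_if_sup_absorbed:
  fixes e :: "real \<Rightarrow> 'b::real_normed_vector"
  assumes "a \<le> b" and "continuous_on {a..b} e"
    and absorb: "\<And>E t. (\<And>s. s \<in> {a..b} \<Longrightarrow> norm (e s) \<le> E) \<Longrightarrow> t \<in> {a..b} \<Longrightarrow> norm (e t) \<le> c + E / 2"
    and "t \<in> {a..b}"
  shows "norm (e t) \<le> 2 * c"
proof -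
  have "continuous_on {a..b} (\<lambda>s. norm (e s))"
    using assms(2) by (intro continuous_intros)
  then obtain tm where tm: "tm \<in> {a..b}" "\<And>s. s \<in> {a..b} \<Longrightarrow> norm (e s) \<le> norm (e tm)"
    using continuous_attains_sup[of "{a..b}" "\<lambda>s. norm (e s)"] assms(1) by auto
  have "norm (e tm) \<le> c + norm (e tm) / 2"
    by (rule absorb[OF tm(2) tm(1)])
  with tm(2)[OF \<open>t \<in> {a..b}\<close>] show ?thesis by simp
qed

lemma norm_le_double_if_derivative_lipschitz:
  fixes w :: "real \<Rightarrow> 'b::banach"
  assumes "a \<le> b"
    and w': "\<And>t. t \<in> {a..b} \<Longrightarrow> (w has_vector_derivative w' t) (at t within {a..b})"
    and L: "\<And>t. t \<in> {a..b} \<Longrightarrow> norm (w' t) \<le> L * norm (w t)"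
    and "0 \<le> L" and "L * (b - a) \<le> 1/2"
    and "t \<in> {a..b}"
  shows "norm (w t) \<le> 2 * norm (w a)"
proof (rule norm_le_double_if_sup_absorbed[OF \<open>a \<le> b\<close> _ _ \<open>t \<in> {a..b}\<close>])
  show "continuous_on {a..b} w"
    using w' by (rule continuous_on_vector_derivative)
  fix E u assume E: "\<And>s. s \<in> {a..b} \<Longrightarrow> norm (w s) \<le> E" and u: "u \<in> {a..b}"
  have "0 \<le> E"
    using E[of a] \<open>a \<le> b\<close> by (auto intro: order_trans[OF norm_ge_zero])
  have "norm (w u - w a) \<le> (L * E) * (u - a)"
  proof (rule norm_diff_le_of_vector_derivative_bound)
    fix v assume v: "v \<in> {a..u}"
    then have "v \<in> {a..b}" using u by auto
    then show "(w has_vector_derivative w' v) (at v within {a..u})"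
      by (rule has_vector_derivative_within_subset[OF w']) (use u in auto)
    show "norm (w' v) \<le> L * E"
      using L[OF \<open>v \<in> {a..b}\<close>] E[OF \<open>v \<in> {a..b}\<close>] \<open>0 \<le> L\<close> by (meson mult_left_mono order_trans)
  qed (use u in auto)
  also have "\<dots> \<le> (L * E) * (b - a)"
    using u \<open>0 \<le> L\<close> \<open>0 \<le> E\<close> by (intro mult_left_mono) auto
  also have "\<dots> = (L * (b - a)) * E"
    by simp
  also have "\<dots> \<le> (1/2) * E"
    using \<open>L * (b - a) \<le> 1/2\<close> \<open>0 \<le> E\<close> by (rule mult_right_mono)
  finally have "norm (w u - w a) \<le> E / 2"
    by simp
  then show "norm (w u) \<le> norm (w a) + E / 2"
    by (metis norm_triangle_sub order_trans add_le_cancel_left)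
qed

lemma first_exit_time:
  fixes h :: "real \<Rightarrow> real"
  assumes h_cont: "continuous_on {a..b} h" and "h a < r" and "t \<in> {a..b}" and "r \<le> h t"
  obtains s where "s \<in> {a..t}" "h s = r" "\<And>u. u \<in> {a..s} \<Longrightarrow> h u \<le> r"
proof -
  define S where "S = {u \<in> {a..b}. r \<le> h u}"
  have "closed S"
    unfolding S_def by (intro continuous_on_closed_Collect_le continuous_intros h_cont closed_atLeastAtMost)
  moreover have "t \<in> S" "bdd_below S"
    using assms(3,4) by (auto simp: S_def intro: bdd_belowI[of _ a])
  ultimately have "Inf S \<in> S" "Inf S \<le> t"
    by (auto intro: closed_contains_Inf cInf_lower)
  define s where "s = Inf S"
  have s: "s \<in> {a..t}" "r \<le> h s"
    using \<open>Inf S \<in> S\<close> \<open>Inf S \<le> t\<close> by (auto simp: S_def s_def)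
  have "a < s"
    using s \<open>h a < r\<close> by (metis atLeastAtMost_iff order.not_eq_order_implies_strict not_le)
  have "h u \<le> r" if "u \<in> {a..<s}" for u
  proof (rule ccontr)
    assume "\<not> h u \<le> r"
    then have "u \<in> S"
      using that s assms(3) by (auto simp: S_def)
    then have "s \<le> u"
      unfolding s_def using \<open>bdd_below S\<close> by (rule cInf_lower)
    with that show False by auto
  qed
  then have "{a..<s} \<subseteq> {u \<in> {a..s}. h u \<le> r}"
    by auto
  moreover have "closed {u \<in> {a..s}. h u \<le> r}"
    using s assms(3) by (intro continuous_on_closed_Collect_le continuous_intros continuous_on_subset[OF h_cont]) auto
  ultimately have below: "{a..s} \<subseteq> {u \<in> {a..s}. h u \<le> r}"
    using closure_minimal closure_atLeastLessThan[OF \<open>a < s\<close>] by metis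
  show thesis
    using that[of s] s below by force
qed

lemma curve_stays_in_ball:
  fixes g :: "real \<Rightarrow> 'b::banach"
  assumes "a \<le> b"
    and g': "\<And>t. t \<in> {a..b} \<Longrightarrow> (g has_vector_derivative g' t) (at t within {a..b})"
    and M: "\<And>t. t \<in> {a..b} \<Longrightarrow> dist (g t) (g a) \<le> r \<Longrightarrow> norm (g' t) \<le> M"
    and "0 < r" and "M * (b - a) < r"
    and "t \<in> {a..b}"
  shows "dist (g t) (g a) < r"
proof (rule ccontr)
  assume "\<not> dist (g t) (g a) < r"
  moreover have "continuous_on {a..b} (\<lambda>u. dist (g u) (g a))"
    using g' by (intro continuous_intros continuous_on_vector_derivative)
  ultimately obtain s where s: "s \<in> {a..t}" "dist (g s) (g a) = r"
    and before_s: "\<And>u. u \<in> {a..s} \<Longrightarrow> dist (g u) (g a) \<le> r"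
    using first_exit_time[of a b "\<lambda>u. dist (g u) (g a)" r t] \<open>0 < r\<close> \<open>t \<in> {a..b}\<close> by auto
  have "s \<in> {a..b}"
    using s(1) \<open>t \<in> {a..b}\<close> by auto
  have "norm (g s - g a) \<le> M * (s - a)"
  proof (rule norm_diff_le_of_vector_derivative_bound)
    fix u assume u: "u \<in> {a..s}"
    then have "u \<in> {a..b}" using \<open>s \<in> {a..b}\<close> by auto
    then show "(g has_vector_derivative g' u) (at u within {a..s})"
      by (rule has_vector_derivative_within_subset[OF g']) (use \<open>s \<in> {a..b}\<close> in auto)
    show "norm (g' u) \<le> M"
      using M[OF \<open>u \<in> {a..b}\<close> before_s[OF u]] .
  qed (use s in simp)
  also have "\<dots> \<le> M * (b - a)"
    using \<open>s \<in> {a..b}\<close> M[of a] \<open>a \<le> b\<close> \<open>0 < r\<close>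
    by (intro mult_left_mono) (auto intro: order_trans[OF norm_ge_zero])
  finally show False
    using s \<open>M * (b - a) < r\<close> by (simp add: dist_norm)
qed

lemma norm_integral_compose_diff_le:
  fixes A Z1 Z2 :: "real \<Rightarrow> ('a::euclidean_space \<Rightarrow>\<^sub>L 'a)"
  assumes "a \<le> c" and cont: "continuous_on {a..c} A" "continuous_on {a..c} Z1" "continuous_on {a..c} Z2"
    and A: "\<And>s. s \<in> {a..c} \<Longrightarrow> norm (A s) \<le> L"
    and Z: "\<And>s. s \<in> {a..c} \<Longrightarrow> norm (Z1 s - Z2 s) \<le> d"
  shows "norm (integral {a..c} (\<lambda>s. A s o\<^sub>L Z1 s) - integral {a..c} (\<lambda>s. A s o\<^sub>L Z2 s)) \<le> L * d * (c - a)"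
proof -
  have "(\<lambda>s. A s o\<^sub>L Z1 s) integrable_on {a..c}" "(\<lambda>s. A s o\<^sub>L Z2 s) integrable_on {a..c}"
    by (intro integrable_continuous_interval continuous_intros cont)+
  then have "integral {a..c} (\<lambda>s. A s o\<^sub>L Z1 s) - integral {a..c} (\<lambda>s. A s o\<^sub>L Z2 s)
      = integral {a..c} (\<lambda>s. A s o\<^sub>L (Z1 s - Z2 s))"
    by (simp add: integral_diff[symmetric] bounded_bilinear.diff_right[OF bounded_bilinear_blinfun_compose])
  also have "norm \<dots> \<le> L * d * (c - a)"
  proof (rule integral_bound[OF \<open>a \<le> c\<close>])
    show "continuous_on {a..c} (\<lambda>s. A s o\<^sub>L (Z1 s - Z2 s))"
      by (intro continuous_intros cont)
    fix s assume s: "s \<in> {a..c}"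
    have "norm (A s o\<^sub>L (Z1 s - Z2 s)) \<le> norm (A s) * norm (Z1 s - Z2 s)"
      by (rule norm_blinfun_compose)
    also have "\<dots> \<le> L * d"
      using A[OF s] Z[OF s] by (intro mult_mono) (auto intro: order_trans[OF norm_ge_zero])
    finally show "norm (A s o\<^sub>L (Z1 s - Z2 s)) \<le> L * d" .
  qed
  finally show ?thesis .
qed

text \<open>Picard iteration in the space of bounded continuous functions: the integral operator
  is a contraction with constant \<open>L (b - a)\<close>.\<close>
lemma linear_ode_solution:
  fixes A :: "real \<Rightarrow> ('a::euclidean_space \<Rightarrow>\<^sub>L 'a)"
  assumes "a \<le> b" and A_cont: "continuous_on {a..b} A"
    and A_bound: "\<And>s. s \<in> {a..b} \<Longrightarrow> norm (A s) \<le> L" and "0 \<le> L" and "L * (b - a) < 1"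
  obtains Y where "Y a = id_blinfun"
    "\<And>t. t \<in> {a..b} \<Longrightarrow> (Y has_vector_derivative A t o\<^sub>L Y t) (at t within {a..b})"
proof -
  define G where "G Z t = id_blinfun + integral {a..t} (\<lambda>s. A s o\<^sub>L apply_bcontfun Z s)"
    for Z :: "real \<Rightarrow>\<^sub>C ('a \<Rightarrow>\<^sub>L 'a)" and t
  have "continuous_on (cbox a b) (G Z)" for Z
    unfolding G_def cbox_interval
    by (intro continuous_intros indefinite_integral_continuous_1 integrable_continuous_interval A_cont) auto
  then have "\<exists>Z'. \<forall>t. apply_bcontfun Z' t = G Z (clamp a b t)" for Z
    by (rule continuous_on_cbox_bcontfunE) blast
  then obtain \<Phi> where \<Phi>: "\<And>Z t. apply_bcontfun (\<Phi> Z) t = G Z (clamp a b t)"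
    by metis
  have clamp: "clamp a b t \<in> {a..b}" for t
    using clamp_in_interval[of a b t] \<open>a \<le> b\<close> by simp
  have "dist (\<Phi> Z1) (\<Phi> Z2) \<le> (L * (b - a)) * dist Z1 Z2" for Z1 Z2
  proof (rule dist_bound)
    fix t
    have sub: "{a..clamp a b t} \<subseteq> {a..b}"
      using clamp[of t] by auto
    have "dist (\<Phi> Z1 t) (\<Phi> Z2 t) \<le> L * dist Z1 Z2 * (clamp a b t - a)"
      unfolding \<Phi> G_def dist_norm add_diff_cancel_left
      using clamp[of t] sub dist_bounded[of Z1 _ Z2] A_bound
      by (intro norm_integral_compose_diff_le continuous_on_subset[OF A_cont sub]) (auto simp: dist_norm)
    also have "\<dots> \<le> L * dist Z1 Z2 * (b - a)"
      using clamp[of t] \<open>0 \<le> L\<close> by (intro mult_left_mono) auto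
    finally show "dist (\<Phi> Z1 t) (\<Phi> Z2 t) \<le> (L * (b - a)) * dist Z1 Z2"
      by (simp add: algebra_simps)
  qed
  then obtain Z where Z: "\<Phi> Z = Z"
    using banach_fix_type[of "L * (b - a)" \<Phi>] \<open>a \<le> b\<close> \<open>0 \<le> L\<close> \<open>L * (b - a) < 1\<close> by auto
  have Z_eq: "apply_bcontfun Z t = G Z t" if "t \<in> {a..b}" for t
    using \<Phi>[of Z t] Z clamp_cancel_cbox[of t a b] that by simp
  show thesis
  proof (rule that[of "apply_bcontfun Z"])
    show "apply_bcontfun Z a = id_blinfun"
      using Z_eq[of a] \<open>a \<le> b\<close> by (simp add: G_def)
    fix t assume "t \<in> {a..b}"
    have "continuous_on {a..b} (\<lambda>s. A s o\<^sub>L apply_bcontfun Z s)"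
      by (intro continuous_intros A_cont) auto
    from integral_has_vector_derivative[OF this \<open>t \<in> {a..b}\<close>]
    have "(G Z has_vector_derivative A t o\<^sub>L apply_bcontfun Z t) (at t within {a..b})"
      unfolding G_def by (subst add.commute) (simp add: has_vector_derivative_add_const)
    then show "(apply_bcontfun Z has_vector_derivative A t o\<^sub>L apply_bcontfun Z t) (at t within {a..b})"
      using Z_eq \<open>t \<in> {a..b}\<close> by (blast intro: has_vector_derivative_transform)
  qed
qed

definition embed_snd :: "'a::real_normed_vector \<Rightarrow>\<^sub>L (real \<times> 'a)" where
  "embed_snd = Blinfun (\<lambda>v. (0, v))"

lemma embed_snd_apply [simp]: "blinfun_apply embed_snd v = (0, v)"
proof -
  have "bounded_linear (\<lambda>v::'a. (0::real, v))"
    by (intro bounded_linear_Pair bounded_linear_zero bounded_linear_ident)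
  then show ?thesis
    by (simp add: embed_snd_def bounded_linear_Blinfun_apply)
qed

lemma partial_derivative_snd:
  assumes "((\<lambda>(t, y). f t y) has_derivative blinfun_apply G) (at (t, y))"
  shows "(f t has_derivative blinfun_apply (G o\<^sub>L embed_snd)) (at y)"
proof -
  have "((\<lambda>y. (t, y)) has_derivative (\<lambda>v. (0, v))) (at y)"
    by (auto intro!: derivative_eq_intros)
  from diff_chain_at[OF this, of "\<lambda>(t, y). f t y"] assms
  have "(f t has_derivative (\<lambda>v. G (0, v))) (at y)"
    by (simp add: o_def)
  moreover have "blinfun_apply (G o\<^sub>L embed_snd) = (\<lambda>v. G (0, v))"
    by auto
  ultimately show ?thesis
    by simp
qed

lemma uniform_linearization:
  fixes f :: "'t::metric_space \<Rightarrow> 'a::real_normed_vector \<Rightarrow> 'b::real_normed_vector"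
  assumes "convex C"
    and deriv: "\<And>t z. t \<in> S \<Longrightarrow> z \<in> C \<Longrightarrow> (f t has_derivative blinfun_apply (P t z)) (at z within C)"
    and unif: "uniformly_continuous_on (S \<times> C) (\<lambda>(t, z). P t z)"
    and "e > 0"
  obtains \<delta> where "\<delta> > 0"
    "\<And>t z w. t \<in> S \<Longrightarrow> z \<in> C \<Longrightarrow> w \<in> C \<Longrightarrow> norm (z - w) < \<delta> \<Longrightarrow>
       norm (f t z - f t w - P t w (z - w)) \<le> e * norm (z - w)"
proof -
  obtain \<delta> where "\<delta> > 0"
    and \<delta>: "\<And>p q. p \<in> S \<times> C \<Longrightarrow> q \<in> S \<times> C \<Longrightarrow> dist q p < \<delta> \<Longrightarrow>
      dist ((\<lambda>(t, z). P t z) q) ((\<lambda>(t, z). P t z) p) < e"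
    using unif \<open>e > 0\<close> unfolding uniformly_continuous_on_def by metis
  have "norm (f t z - f t w - P t w (z - w)) \<le> e * norm (z - w)"
    if "t \<in> S" "z \<in> C" "w \<in> C" "norm (z - w) < \<delta>" for t z w
  proof -
    define B where "B = C \<inter> ball w \<delta>"
    have "w \<in> B" "z \<in> B"
      using that \<open>\<delta> > 0\<close> by (auto simp: B_def dist_norm norm_minus_commute)
    have "convex B"
      unfolding B_def by (intro convex_Int \<open>convex C\<close> convex_ball)
    have "norm (f t z - f t w - P t w (z - w)) \<le> norm (z - w) * e"
    proof (rule differentiable_bound_linearization[where S = B])
      show "w + u *\<^sub>R (z - w) \<in> B" if "u \<in> {0..1}" for u
        using convexD_alt[OF \<open>convex B\<close> \<open>w \<in> B\<close> \<open>z \<in> B\<close>] that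
        by (simp add: algebra_simps)
      show "(f t has_derivative blinfun_apply (P t v)) (at v within B)" if "v \<in> B" for v
        using deriv[OF \<open>t \<in> S\<close>] that by (auto simp: B_def intro: has_derivative_subset)
      show "onorm (blinfun_apply (P t v) - blinfun_apply (P t w)) \<le> e" if "v \<in> B" for v
      proof -
        have "dist (P t v) (P t w) < e"
          using \<delta>[of "(t, w)" "(t, v)"] that \<open>t \<in> S\<close> \<open>w \<in> C\<close>
          by (auto simp: B_def dist_Pair_Pair dist_commute)
        then show ?thesis
          by (simp add: dist_norm norm_blinfun.rep_eq fun_diff_def minus_blinfun.rep_eq[symmetric])
      qed
    qed (rule \<open>w \<in> B\<close>)
    then show ?thesis
      by (simp add: mult.commute)
  qed
  with \<open>\<delta> > 0\<close> show thesis
    by (rule that)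
qed

lemma has_vector_derivative_blinfun_apply:
  assumes "(Y has_vector_derivative Y') (at t within S)"
  shows "((\<lambda>s. blinfun_apply (Y s) h) has_vector_derivative blinfun_apply Y' h) (at t within S)"
  using assms unfolding has_vector_derivative_def
  by (auto intro!: derivative_eq_intros simp: blinfun.scaleR_left)

locale variational_flow =
  fixes f :: "real \<Rightarrow> 'a::euclidean_space \<Rightarrow> 'a"
    and P :: "real \<Rightarrow> 'a \<Rightarrow> 'a \<Rightarrow>\<^sub>L 'a"
    and u :: "'a \<Rightarrow> real \<Rightarrow> 'a"
    and Y :: "real \<Rightarrow> 'a \<Rightarrow>\<^sub>L 'a"
    and a b r L :: real and x :: 'a and C :: "'a set"
  assumes le: "a \<le> b" and r: "0 < r" and L_nonneg: "0 \<le> L" and short: "L * (b - a) \<le> 1/2"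
    and curve_deriv: "\<And>y t. y \<in> cball x r \<Longrightarrow> t \<in> {a..b} \<Longrightarrow>
      (u y has_vector_derivative f t (u y t)) (at t within {a..b})"
    and curve_start: "\<And>y. y \<in> cball x r \<Longrightarrow> u y a = y"
    and curve_in: "\<And>y t. y \<in> cball x r \<Longrightarrow> t \<in> {a..b} \<Longrightarrow> u y t \<in> C"
    and lipschitz: "\<And>t z w. t \<in> {a..b} \<Longrightarrow> z \<in> C \<Longrightarrow> w \<in> C \<Longrightarrow> norm (f t z - f t w) \<le> L * norm (z - w)"
    and linearization: "\<And>e. e > 0 \<Longrightarrow> \<exists>\<delta>>0. \<forall>t\<in>{a..b}. \<forall>z\<in>C. \<forall>w\<in>C. norm (z - w) < \<delta> \<longrightarrow>
      norm (f t z - f t w - P t w (z - w)) \<le> e * norm (z - w)"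
    and P_bound: "\<And>t z. t \<in> {a..b} \<Longrightarrow> z \<in> C \<Longrightarrow> norm (P t z) \<le> L"
    and Y_start: "Y a = id_blinfun"
    and Y_deriv: "\<And>t. t \<in> {a..b} \<Longrightarrow> (Y has_vector_derivative P t (u x t) o\<^sub>L Y t) (at t within {a..b})"
begin

lemma center_in_cball: "x \<in> cball x r"
  using r by simp

lemma norm_variational_le: "norm (P t (u x t) o\<^sub>L Y t) \<le> L * norm (Y t)" if "t \<in> {a..b}"
  using norm_blinfun_compose[of "P t (u x t)" "Y t"] P_bound[OF that curve_in[OF center_in_cball that]]
  by (meson mult_right_mono norm_ge_zero order_trans)

lemma norm_Y_le: "norm (Y t) \<le> 2" if "t \<in> {a..b}"
proof -
  have "norm (Y t) \<le> 2 * norm (Y a)"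
    using le Y_deriv norm_variational_le L_nonneg short that by (rule norm_le_double_if_derivative_lipschitz)
  also have "\<dots> \<le> 2"
    using norm_blinfun_id_le by (simp add: Y_start)
  finally show ?thesis .
qed

lemma norm_Y_minus_id_le: "norm (Y t - id_blinfun) \<le> 2 * L * (t - a)" if "t \<in> {a..b}"
proof -
  have "norm (Y t - Y a) \<le> (2 * L) * (t - a)"
  proof (rule norm_diff_le_of_vector_derivative_bound)
    fix s assume s: "s \<in> {a..t}"
    then have "s \<in> {a..b}" using that by auto
    then show "(Y has_vector_derivative P s (u x s) o\<^sub>L Y s) (at s within {a..t})"
      by (rule has_vector_derivative_within_subset[OF Y_deriv]) (use that in auto)
    show "norm (P s (u x s) o\<^sub>L Y s) \<le> 2 * L"
      using norm_variational_le[OF \<open>s \<in> {a..b}\<close>]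
        mult_left_mono[OF norm_Y_le[OF \<open>s \<in> {a..b}\<close>] L_nonneg]
      by (simp add: mult.commute)
  qed (use that in auto)
  then show ?thesis
    by (simp add: Y_start)
qed

lemma curve_diff_le: "norm (u y t - u x t) \<le> 2 * norm (y - x)" if "y \<in> cball x r" "t \<in> {a..b}"
proof -
  have "norm (u y t - u x t) \<le> 2 * norm (u y a - u x a)"
  proof (rule norm_le_double_if_derivative_lipschitz[OF le _ _ L_nonneg short \<open>t \<in> {a..b}\<close>])
    fix s assume s: "s \<in> {a..b}"
    show "((\<lambda>s. u y s - u x s) has_vector_derivative f s (u y s) - f s (u x s)) (at s within {a..b})"
      using curve_deriv[OF \<open>y \<in> cball x r\<close> s] curve_deriv[OF center_in_cball s]
      by (rule has_vector_derivative_diff)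
    show "norm (f s (u y s) - f s (u x s)) \<le> L * norm (u y s - u x s)"
      using lipschitz[OF s curve_in[OF \<open>y \<in> cball x r\<close> s] curve_in[OF center_in_cball s]] .
  qed
  then show ?thesis
    using curve_start[OF \<open>y \<in> cball x r\<close>] curve_start[OF center_in_cball] by simp
qed

lemma linearization_error_le:
  assumes y: "y \<in> cball x r" and "0 \<le> e"
    and lin: "\<And>s. s \<in> {a..b} \<Longrightarrow>
      norm (f s (u y s) - f s (u x s) - P s (u x s) (u y s - u x s)) \<le> e * norm (u y s - u x s)"
  shows "norm (u y b - u x b - Y b (y - x)) \<le> 4 * e * (b - a) * norm (y - x)"
proof -
  define h where "h = y - x"
  define err where "err s = u y s - u x s - Y s h" for s
  define err' where "err' s = f s (u y s) - f s (u x s) - P s (u x s) (Y s h)" for s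
  have err_deriv: "(err has_vector_derivative err' s) (at s within {a..b})" if "s \<in> {a..b}" for s
    unfolding err_def err'_def
    using curve_deriv[OF y that] curve_deriv[OF center_in_cball that]
      has_vector_derivative_blinfun_apply[OF Y_deriv[OF that], of h]
    by (intro has_vector_derivative_diff) simp_all
  have "continuous_on {a..b} err"
    using err_deriv by (rule continuous_on_vector_derivative)
  have "norm (err b) \<le> 2 * (2 * e * (b - a) * norm h)"
  proof (rule norm_le_double_if_sup_absorbed[OF le \<open>continuous_on {a..b} err\<close>])
    fix E t assume E: "\<And>s. s \<in> {a..b} \<Longrightarrow> norm (err s) \<le> E" and t: "t \<in> {a..b}"
    have "0 \<le> E"
      using E[OF t] by (rule order_trans[OF norm_ge_zero])
    have "norm (err t - err a) \<le> (2 * e * norm h + L * E) * (t - a)"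
    proof (rule norm_diff_le_of_vector_derivative_bound)
      fix s assume "s \<in> {a..t}"
      then have s: "s \<in> {a..b}" using t by auto
      show "(err has_vector_derivative err' s) (at s within {a..t})"
        by (rule has_vector_derivative_within_subset[OF err_deriv[OF s]]) (use t in auto)
      have "err' s = (f s (u y s) - f s (u x s) - P s (u x s) (u y s - u x s)) + P s (u x s) (err s)"
        by (simp add: err_def err'_def blinfun.diff_right)
      also have "norm \<dots> \<le> e * (2 * norm h) + L * E"
      proof (rule norm_triangle_le, rule add_mono)
        show "norm (f s (u y s) - f s (u x s) - P s (u x s) (u y s - u x s)) \<le> e * (2 * norm h)"
          using lin[OF s] mult_left_mono[OF curve_diff_le[OF y s] \<open>0 \<le> e\<close>] by (simp add: h_def)
        show "norm (P s (u x s) (err s)) \<le> L * E"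
          using norm_blinfun[of "P s (u x s)" "err s"] P_bound[OF s curve_in[OF center_in_cball s]] E[OF s]
          by (meson mult_mono norm_ge_zero order_trans L_nonneg)
      qed
      finally show "norm (err' s) \<le> 2 * e * norm h + L * E"
        by simp
    qed (use t in auto)
    also have "\<dots> \<le> (2 * e * norm h + L * E) * (b - a)"
      using t \<open>0 \<le> e\<close> L_nonneg \<open>0 \<le> E\<close> by (intro mult_left_mono) auto
    also have "\<dots> \<le> 2 * e * (b - a) * norm h + E / 2"
      using mult_right_mono[OF short \<open>0 \<le> E\<close>] by (simp add: algebra_simps)
    finally show "norm (err t) \<le> 2 * e * (b - a) * norm h + E / 2"
      using curve_start[OF y] curve_start[OF center_in_cball] by (simp add: err_def h_def Y_start)
  qed (use le in simp)
  then show ?thesis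
    by (simp add: err_def h_def)
qed

lemma has_derivative_endpoint: "((\<lambda>y. u y b) has_derivative blinfun_apply (Y b)) (at x)"
  unfolding has_derivative_at_alt
proof (intro conjI allI impI blinfun.bounded_linear_right)
  fix e :: real assume "e > 0"
  define e' where "e' = e / (4 * (b - a) + 1)"
  have "e' > 0" "4 * e' * (b - a) \<le> e"
    using \<open>e > 0\<close> le by (auto simp: e'_def field_simps)
  obtain \<delta> where "\<delta> > 0" and \<delta>: "\<forall>t\<in>{a..b}. \<forall>z\<in>C. \<forall>w\<in>C. norm (z - w) < \<delta> \<longrightarrow>
      norm (f t z - f t w - P t w (z - w)) \<le> e' * norm (z - w)"
    using linearization[OF \<open>e' > 0\<close>] by blast
  show "\<exists>d>0. \<forall>y. norm (y - x) < d \<longrightarrow> norm (u y b - u x b - Y b (y - x)) \<le> e * norm (y - x)"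
  proof (intro exI[of _ "min r (\<delta> / 2)"] conjI allI impI)
    fix y assume y: "norm (y - x) < min r (\<delta> / 2)"
    then have "y \<in> cball x r"
      by (simp add: dist_norm norm_minus_commute)
    have "norm (u y b - u x b - Y b (y - x)) \<le> 4 * e' * (b - a) * norm (y - x)"
    proof (rule linearization_error_le[OF \<open>y \<in> cball x r\<close>])
      fix s assume s: "s \<in> {a..b}"
      have "norm (u y s - u x s) < \<delta>"
        using curve_diff_le[OF \<open>y \<in> cball x r\<close> s] y by simp
      then show "norm (f s (u y s) - f s (u x s) - P s (u x s) (u y s - u x s)) \<le> e' * norm (u y s - u x s)"
        using \<delta> s curve_in[OF \<open>y \<in> cball x r\<close> s] curve_in[OF center_in_cball s] by blast
    qed (use \<open>e' > 0\<close> in simp)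
    also have "\<dots> \<le> e * norm (y - x)"
      using \<open>4 * e' * (b - a) \<le> e\<close> by (rule mult_right_mono) simp
    finally show "norm (u y b - u x b - Y b (y - x)) \<le> e * norm (y - x)" .
  qed (use r \<open>\<delta> > 0\<close> in simp)
qed

lemma Y_endpoint_estimate:
  assumes \<delta>: "\<And>s. s \<in> {a..b} \<Longrightarrow> norm (P s (u x s) - P a (u x a)) \<le> \<delta>"
  shows "norm (Y b - id_blinfun - (b - a) *\<^sub>R P a (u x a)) \<le> (2 * \<delta> + 2 * L\<^sup>2 * (b - a)) * (b - a)"
proof -
  define A0 where "A0 = P a (u x a)"
  have "norm ((Y b - (b - a) *\<^sub>R A0) - (Y a - (a - a) *\<^sub>R A0)) \<le> (2 * \<delta> + 2 * L\<^sup>2 * (b - a)) * (b - a)"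
  proof (rule norm_diff_le_of_vector_derivative_bound[OF le])
    fix s assume s: "s \<in> {a..b}"
    show "((\<lambda>s. Y s - (s - a) *\<^sub>R A0) has_vector_derivative (P s (u x s) o\<^sub>L Y s) - A0) (at s within {a..b})"
      using Y_deriv[OF s] by (auto intro!: derivative_eq_intros)
    have "(P s (u x s) o\<^sub>L Y s) - A0 = ((P s (u x s) - A0) o\<^sub>L Y s) + (A0 o\<^sub>L (Y s - id_blinfun))"
      by (rule blinfun_eqI) (simp add: blinfun.diff_left blinfun.diff_right blinfun.add_left)
    also have "norm \<dots> \<le> norm (P s (u x s) - A0) * norm (Y s) + norm A0 * norm (Y s - id_blinfun)"
      by (intro norm_triangle_le add_mono norm_blinfun_compose)
    also have "\<dots> \<le> \<delta> * 2 + L * (2 * L * (b - a))"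
    proof (intro add_mono mult_mono')
      have "2 * L * (s - a) \<le> 2 * L * (b - a)"
        using s L_nonneg by (intro mult_left_mono) auto
      then show "norm (Y s - id_blinfun) \<le> 2 * L * (b - a)"
        using norm_Y_minus_id_le[OF s] by linarith
      show "norm A0 \<le> L"
        unfolding A0_def using le by (intro P_bound curve_in center_in_cball) auto
    qed (use \<delta>[OF s] norm_Y_le[OF s] L_nonneg in \<open>auto simp: A0_def\<close>)
    finally show "norm ((P s (u x s) o\<^sub>L Y s) - A0) \<le> 2 * \<delta> + 2 * L\<^sup>2 * (b - a)"
      by (simp add: power2_eq_square algebra_simps)
  qed
  then show ?thesis
    by (simp add: Y_start A0_def diff_diff_eq2 diff_diff_eq add.commute)
qed

end

lemma flow_stays_in_cball:
  fixes \<phi> :: "real \<Rightarrow> real \<Rightarrow> 'a::banach \<Rightarrow> 'a"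
  assumes flow: "\<And>t. t \<in> {t0..t0+T} \<Longrightarrow>
      ((\<lambda>s. \<phi> s t0 y) has_vector_derivative f t (\<phi> t t0 y)) (at t within {t0..t0+T})"
    and "\<phi> t0 t0 y = y" and "y \<in> cball x r"
    and f_bound: "\<And>t z. t \<in> {t0..t0+T} \<Longrightarrow> z \<in> cball x (2 * r) \<Longrightarrow> norm (f t z) \<le> M"
    and "0 \<le> T" "0 < r" "M * T < r" and "t \<in> {t0..t0+T}"
  shows "\<phi> t t0 y \<in> cball x (2 * r)"
proof -
  have "dist (\<phi> t t0 y) y < r"
  proof (rule curve_stays_in_ball[OF _ flow _ \<open>0 < r\<close> _ \<open>t \<in> {t0..t0+T}\<close>, unfolded \<open>\<phi> t0 t0 y = y\<close>])
    fix s assume "s \<in> {t0..t0+T}" "dist (\<phi> s t0 y) y \<le> r"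
    then show "norm (f s (\<phi> s t0 y)) \<le> M"
      using \<open>y \<in> cball x r\<close> dist_triangle[of x "\<phi> s t0 y" y]
      by (intro f_bound) (auto simp: dist_commute)
  qed (use \<open>0 \<le> T\<close> \<open>M * T < r\<close> in auto)
  then show ?thesis
    using \<open>y \<in> cball x r\<close> dist_triangle[of x "\<phi> t t0 y" y] by (auto simp: dist_commute)
qed

lemma time_map_has_derivative_near_linear:
  fixes f :: "real \<Rightarrow> real^'n \<Rightarrow> real^'n" and \<phi> :: "real \<Rightarrow> real \<Rightarrow> real^'n \<Rightarrow> real^'n"
    and P :: "real \<Rightarrow> real^'n \<Rightarrow> (real^'n) \<Rightarrow>\<^sub>L (real^'n)"
    and x :: "real^'n" and t0 T r :: real
  defines "I \<equiv> {t0..t0+T}" and "C \<equiv> cball x (2 * r)"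
  assumes "0 < T" "0 < r"
    and flow: "\<And>y t. y \<in> cball x r \<Longrightarrow> t \<in> I \<Longrightarrow>
      ((\<lambda>s. \<phi> s t0 y) has_vector_derivative f t (\<phi> t t0 y)) (at t within I)"
    and flow_start: "\<And>y. y \<in> cball x r \<Longrightarrow> \<phi> t0 t0 y = y"
    and f_bound: "\<And>t z. t \<in> I \<Longrightarrow> z \<in> C \<Longrightarrow> norm (f t z) \<le> M" and "M * T < r"
    and deriv: "\<And>t z. t \<in> I \<Longrightarrow> z \<in> C \<Longrightarrow> (f t has_derivative blinfun_apply (P t z)) (at z within C)"
    and P_bound: "\<And>t z. t \<in> I \<Longrightarrow> z \<in> C \<Longrightarrow> norm (P t z) \<le> L" and "0 \<le> L" "L * T \<le> 1/2"
    and linearization: "\<And>e. e > 0 \<Longrightarrow> \<exists>\<delta>>0. \<forall>t\<in>I. \<forall>z\<in>C. \<forall>w\<in>C. norm (z - w) < \<delta> \<longrightarrow>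
      norm (f t z - f t w - P t w (z - w)) \<le> e * norm (z - w)"
    and P_cont: "continuous_on I (\<lambda>s. P s (\<phi> s t0 x))"
    and \<delta>: "\<And>s. s \<in> I \<Longrightarrow> norm (P s (\<phi> s t0 x) - P t0 x) \<le> \<delta>"
  shows "\<exists>Y. (time_map \<phi> t0 T has_derivative blinfun_apply Y) (at x) \<and>
           norm (Y - id_blinfun - T *\<^sub>R P t0 x) \<le> (2 * \<delta> + 2 * L\<^sup>2 * T) * T"
proof -
  have "x \<in> cball x r" "t0 \<le> t0 + T"
    using \<open>0 < r\<close> \<open>0 < T\<close> by auto
  have curve_in: "\<phi> t t0 y \<in> C" if "y \<in> cball x r" "t \<in> I" for y t
    unfolding C_def
    by (rule flow_stays_in_cball[where f = f and M = M])
      (use flow flow_start f_bound that \<open>0 < T\<close> \<open>0 < r\<close> \<open>M * T < r\<close> in \<open>auto simp: I_def C_def\<close>)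
  obtain Y where Y_start: "Y t0 = id_blinfun"
    and Y_deriv: "\<And>t. t \<in> I \<Longrightarrow> (Y has_vector_derivative P t (\<phi> t t0 x) o\<^sub>L Y t) (at t within I)"
    unfolding I_def
  proof (rule linear_ode_solution[OF \<open>t0 \<le> t0 + T\<close> P_cont[unfolded I_def] _ \<open>0 \<le> L\<close>])
    show "norm (P s (\<phi> s t0 x)) \<le> L" if "s \<in> {t0..t0+T}" for s
      using curve_in[OF \<open>x \<in> cball x r\<close>] that P_bound by (simp add: I_def)
  qed (use \<open>L * T \<le> 1/2\<close> in auto)
  have flow_setting: "variational_flow f P (\<lambda>y s. \<phi> s t0 y) Y t0 (t0 + T) r L x C"
  proof
    show "L * (t0 + T - t0) \<le> 1/2"
      using \<open>L * T \<le> 1/2\<close> by simp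
    show "norm (f t z - f t w) \<le> L * norm (z - w)" if "t \<in> {t0..t0 + T}" "z \<in> C" "w \<in> C" for t z w
      using deriv P_bound that
      by (intro differentiable_bound[of C]) (auto simp: I_def C_def norm_blinfun.rep_eq)
  qed (use \<open>t0 \<le> t0 + T\<close> \<open>0 < r\<close> \<open>0 \<le> L\<close> flow flow_start curve_in linearization P_bound Y_start Y_deriv
       in \<open>auto simp: I_def\<close>)
  have "time_map \<phi> t0 T = (\<lambda>y. \<phi> (t0 + T) t0 y)"
    by (simp add: time_map_def fun_eq_iff)
  moreover have "norm (Y (t0 + T) - id_blinfun - T *\<^sub>R P t0 x) \<le> (2 * \<delta> + 2 * L\<^sup>2 * T) * T"
    using variational_flow.Y_endpoint_estimate[OF flow_setting, of \<delta>] \<delta> flow_start[OF \<open>x \<in> cball x r\<close>]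
    by (simp add: I_def)
  ultimately show ?thesis
    using variational_flow.has_derivative_endpoint[OF flow_setting] by auto
qed

lemma eventually_time_map_derivative_near_linear:
  fixes f :: "real \<Rightarrow> real^'n \<Rightarrow> real^'n" and \<phi> :: "real \<Rightarrow> real \<Rightarrow> real^'n \<Rightarrow> real^'n"
    and P :: "real \<Rightarrow> real^'n \<Rightarrow> (real^'n) \<Rightarrow>\<^sub>L (real^'n)"
    and x :: "real^'n" and t0 \<epsilon> r :: real
  defines "I \<equiv> {t0..t0+\<epsilon>}" and "C \<equiv> cball x (2 * r)"
  assumes "0 < \<epsilon>" "0 < r"
    and flow: "\<And>y t. y \<in> cball x r \<Longrightarrow> t \<in> I \<Longrightarrow>
      ((\<lambda>s. \<phi> s t0 y) has_vector_derivative f t (\<phi> t t0 y)) (at t within I)"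
    and flow_start: "\<And>y. y \<in> cball x r \<Longrightarrow> \<phi> t0 t0 y = y"
    and f_bound: "\<And>t z. t \<in> I \<Longrightarrow> z \<in> C \<Longrightarrow> norm (f t z) \<le> M"
    and deriv: "\<And>t z. t \<in> I \<Longrightarrow> z \<in> C \<Longrightarrow> (f t has_derivative blinfun_apply (P t z)) (at z within C)"
    and P_bound: "\<And>t z. t \<in> I \<Longrightarrow> z \<in> C \<Longrightarrow> norm (P t z) \<le> L" and "0 \<le> L"
    and linearization: "\<And>e. e > 0 \<Longrightarrow> \<exists>\<delta>>0. \<forall>t\<in>I. \<forall>z\<in>C. \<forall>w\<in>C. norm (z - w) < \<delta> \<longrightarrow>
      norm (f t z - f t w - P t w (z - w)) \<le> e * norm (z - w)"
    and P_cont: "continuous_on I (\<lambda>s. P s (\<phi> s t0 x))"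
    and "\<eta> > 0"
  shows "\<forall>\<^sub>F T in at_right 0. \<exists>Y. (time_map \<phi> t0 T has_derivative blinfun_apply Y) (at x) \<and>
           norm (Y - id_blinfun - T *\<^sub>R P t0 x) \<le> \<eta> * T"
proof -
  have "t0 \<in> I" "\<phi> t0 t0 x = x"
    using \<open>0 < \<epsilon>\<close> \<open>0 < r\<close> flow_start[of x] by (auto simp: I_def)
  then obtain d where "d > 0"
    and d: "\<And>s. s \<in> I \<Longrightarrow> dist s t0 < d \<Longrightarrow> dist (P s (\<phi> s t0 x)) (P t0 x) < \<eta> / 4"
    using P_cont \<open>\<eta> > 0\<close> unfolding continuous_on_iff by (metis zero_less_divide_iff zero_less_numeral)
  have small: "\<forall>\<^sub>F T in at_right 0. c * T < e" if "e > 0" for c e :: real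
  proof -
    have "((\<lambda>T. c * T) \<longlongrightarrow> c * 0) (at_right (0::real))"
      by (intro tendsto_intros)
    then show ?thesis
      using that by (simp add: order_tendstoD(2))
  qed
  have "(1/2 :: real) > 0" "\<eta> / 4 > 0"
    using \<open>\<eta> > 0\<close> by simp_all
  show ?thesis
    using eventually_at_right_less[of 0] small[OF \<open>0 < \<epsilon>\<close>, of 1] small[OF \<open>d > 0\<close>, of 1]
      small[OF \<open>0 < r\<close>, of M] small[OF \<open>1/2 > 0\<close>, of L] small[OF \<open>\<eta> / 4 > 0\<close>, of "L\<^sup>2"]
  proof eventually_elim
    case (elim T)
    then have sub: "{t0..t0+T} \<subseteq> I"
      by (auto simp: I_def)
    have "\<exists>Y. (time_map \<phi> t0 T has_derivative blinfun_apply Y) (at x) \<and>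
        norm (Y - id_blinfun - T *\<^sub>R P t0 x) \<le> (2 * (\<eta> / 4) + 2 * L\<^sup>2 * T) * T"
    proof (rule time_map_has_derivative_near_linear[where M = M and L = L])
      show "((\<lambda>s. \<phi> s t0 y) has_vector_derivative f t (\<phi> t t0 y)) (at t within {t0..t0+T})"
        if "y \<in> cball x r" "t \<in> {t0..t0+T}" for y t
        using flow that sub by (blast intro: has_vector_derivative_within_subset)
      show "continuous_on {t0..t0+T} (\<lambda>s. P s (\<phi> s t0 x))"
        using P_cont sub by (rule continuous_on_subset)
      show "norm (P s (\<phi> s t0 x) - P t0 x) \<le> \<eta> / 4" if "s \<in> {t0..t0+T}" for s
        using d[of s] that sub elim by (auto simp: dist_norm dist_real_def)
      show "\<exists>\<delta>>0. \<forall>t\<in>{t0..t0+T}. \<forall>z\<in>cball x (2 * r). \<forall>w\<in>cball x (2 * r). norm (z - w) < \<delta> \<longrightarrow>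
          norm (f t z - f t w - P t w (z - w)) \<le> e * norm (z - w)" if "e > 0" for e
        using linearization[OF that] sub unfolding C_def by blast
    qed (use elim sub \<open>0 < r\<close> \<open>0 \<le> L\<close> flow_start f_bound deriv P_bound linearization in \<open>auto simp: C_def\<close>)
    moreover have "(2 * (\<eta> / 4) + 2 * L\<^sup>2 * T) * T \<le> \<eta> * T"
      using elim by (intro mult_right_mono) auto
    ultimately show ?case
      by (meson order_trans)
  qed
qed

lemma continuous_on_if_has_derivative_at:
  assumes "\<And>z. z \<in> D \<Longrightarrow> (g has_derivative g' z) (at z)"
  shows "continuous_on D g"
proof (rule has_derivative_continuous_on)
  fix z assume "z \<in> D"
  then show "(g has_derivative g' z) (at z within D)"
    by (rule has_derivative_at_withinI[OF assms])
qed

lemma compact_continuous_norm_bound: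
  assumes "compact K" and "continuous_on K g"
  obtains B where "B > 0" "\<And>p. p \<in> K \<Longrightarrow> norm (g p) \<le> B"
  using compact_imp_bounded[OF compact_continuous_image[OF assms(2,1)]]
  unfolding bounded_pos by blast

lemma time_box_in_open:
  fixes x :: "'a::metric_space"
  assumes "open D" "(t0, x) \<in> D" "open U" "x \<in> U"
  obtains r where "r > 0" "cball x r \<subseteq> U" "{t0..t0 + r} \<times> cball x (2 * r) \<subseteq> D"
proof -
  obtain \<rho> where "\<rho> > 0" "cball (t0, x) \<rho> \<subseteq> D"
    using open_contains_cball assms(1,2) by blast
  obtain r0 where "r0 > 0" "ball x r0 \<subseteq> U"
    using open_contains_ball assms(3,4) by blast
  define r where "r = min (\<rho> / 4) (r0 / 2)"
  have "{t0..t0 + r} \<times> cball x (2 * r) \<subseteq> cball (t0, x) \<rho>"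
  proof safe
    fix t z assume "t \<in> {t0..t0 + r}" "z \<in> cball x (2 * r)"
    then have "dist (t0, x) (t, z) \<le> dist t0 t + dist x z"
      using dist_Pair_Pair[of t0 x t z] sqrt_sum_squares_le_sum_abs[of "dist t0 t" "dist x z"] by simp
    also have "\<dots> \<le> \<rho>"
      using \<open>t \<in> {t0..t0 + r}\<close> \<open>z \<in> cball x (2 * r)\<close> by (auto simp: r_def dist_real_def)
    finally show "(t, z) \<in> cball (t0, x) \<rho>"
      by simp
  qed
  moreover have "r > 0" "cball x r \<subseteq> U"
    using \<open>\<rho> > 0\<close> \<open>r0 > 0\<close> \<open>ball x r0 \<subseteq> U\<close> by (auto simp: r_def)
  ultimately show thesis
    using that \<open>cball (t0, x) \<rho> \<subseteq> D\<close> by blast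
qed

lemma eventually_time_map_derivative:
  fixes f :: "real \<Rightarrow> real^'n \<Rightarrow> real^'n" and \<phi> :: "real \<Rightarrow> real \<Rightarrow> real^'n \<Rightarrow> real^'n"
    and F' :: "real \<times> (real^'n) \<Rightarrow> (real \<times> (real^'n)) \<Rightarrow>\<^sub>L (real^'n)"
  assumes "open D" and F'_cont: "continuous_on D F'"
    and F': "\<And>z. z \<in> D \<Longrightarrow> ((\<lambda>(t, y). f t y) has_derivative blinfun_apply (F' z)) (at z)"
    and "(t0, x) \<in> D" and "open U" "x \<in> U" and "\<epsilon> > 0"
    and flow: "\<forall>y\<in>U. \<phi> t0 t0 y = y \<and>
        (\<forall>t\<in>{t0..t0+\<epsilon>}. (t, \<phi> t t0 y) \<in> D \<and>
           ((\<lambda>s. \<phi> s t0 y) has_vector_derivative f t (\<phi> t t0 y)) (at t within {t0..t0+\<epsilon>}))"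
    and "\<eta> > 0"
  shows "\<forall>\<^sub>F T in at_right 0. \<exists>Y. (time_map \<phi> t0 T has_derivative blinfun_apply Y) (at x) \<and>
           norm (Y - id_blinfun - T *\<^sub>R (F' (t0, x) o\<^sub>L embed_snd)) \<le> \<eta> * T"
proof -
  define P where "P t z = F' (t, z) o\<^sub>L embed_snd" for t z
  have "(\<lambda>(t, z). P t z) = (\<lambda>p. F' p o\<^sub>L embed_snd)"
    by (auto simp: P_def)
  then have P_cont: "continuous_on D (\<lambda>(t, z). P t z)"
    by (simp add: continuous_intros F'_cont)
  obtain r where "r > 0" "cball x r \<subseteq> U" and box: "{t0..t0 + r} \<times> cball x (2 * r) \<subseteq> D"
    using time_box_in_open assms(1,4-6) by blast
  define I where "I = {t0..t0 + min \<epsilon> r}"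
  define C where "C = cball x (2 * r)"
  have "I \<times> C \<subseteq> {t0..t0 + r} \<times> cball x (2 * r)"
    by (auto simp: I_def C_def)
  then have "I \<times> C \<subseteq> D"
    using box by blast
  have "compact (I \<times> C)"
    by (auto simp: I_def C_def compact_Times)
  have "continuous_on D (\<lambda>(t, y). f t y)"
    using F' by (rule continuous_on_if_has_derivative_at)
  then obtain M where M: "\<And>p. p \<in> I \<times> C \<Longrightarrow> norm ((\<lambda>(t, y). f t y) p) \<le> M"
    by (metis compact_continuous_norm_bound[OF \<open>compact (I \<times> C)\<close>] continuous_on_subset \<open>I \<times> C \<subseteq> D\<close>)
  obtain L where "L > 0" and L: "\<And>p. p \<in> I \<times> C \<Longrightarrow> norm ((\<lambda>(t, z). P t z) p) \<le> L"
    by (metis compact_continuous_norm_bound[OF \<open>compact (I \<times> C)\<close>] continuous_on_subset[OF P_cont] \<open>I \<times> C \<subseteq> D\<close>)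
  have deriv: "(f t has_derivative blinfun_apply (P t z)) (at z within C)" if "t \<in> I" "z \<in> C" for t z
  proof -
    have "(t, z) \<in> D"
      using \<open>I \<times> C \<subseteq> D\<close> that by blast
    then show ?thesis
      unfolding P_def by (rule has_derivative_at_withinI[OF partial_derivative_snd[OF F']])
  qed
  have "uniformly_continuous_on (I \<times> C) (\<lambda>(t, z). P t z)"
    using \<open>I \<times> C \<subseteq> D\<close> \<open>compact (I \<times> C)\<close> P_cont
    by (intro compact_uniformly_continuous) (rule continuous_on_subset)
  from uniform_linearization[OF _ deriv this]
  have linearization: "\<exists>\<delta>>0. \<forall>t\<in>I. \<forall>z\<in>C. \<forall>w\<in>C. norm (z - w) < \<delta> \<longrightarrow>
      norm (f t z - f t w - P t w (z - w)) \<le> e * norm (z - w)" if "e > 0" for e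
    using that by (metis C_def convex_cball)
  have "I \<subseteq> {t0..t0+\<epsilon>}"
    by (auto simp: I_def)
  have flow_I: "((\<lambda>s. \<phi> s t0 y) has_vector_derivative f t (\<phi> t t0 y)) (at t within I)"
    if "y \<in> U" "t \<in> I" for y t
    using flow that \<open>I \<subseteq> {t0..t0+\<epsilon>}\<close> by (blast intro: has_vector_derivative_within_subset)
  have "continuous_on I (\<lambda>s. (s, \<phi> s t0 x))"
    using flow_I[OF \<open>x \<in> U\<close>] by (intro continuous_intros continuous_on_vector_derivative)
  moreover have "(\<lambda>s. (s, \<phi> s t0 x)) ` I \<subseteq> D"
    using flow \<open>x \<in> U\<close> \<open>I \<subseteq> {t0..t0+\<epsilon>}\<close> by auto
  ultimately have A_cont: "continuous_on I (\<lambda>s. P s (\<phi> s t0 x))"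
    using continuous_on_compose2[OF P_cont] by force
  have "\<forall>\<^sub>F T in at_right 0. \<exists>Y. (time_map \<phi> t0 T has_derivative blinfun_apply Y) (at x) \<and>
      norm (Y - id_blinfun - T *\<^sub>R P t0 x) \<le> \<eta> * T"
    unfolding I_def
  proof (rule eventually_time_map_derivative_near_linear[where M = M and L = L and r = r])
    fix y t assume "y \<in> cball x r"
    then have "y \<in> U"
      using \<open>cball x r \<subseteq> U\<close> by blast
    then show "\<phi> t0 t0 y = y"
      using flow by blast
    assume "t \<in> {t0..t0 + min \<epsilon> r}"
    then show "((\<lambda>s. \<phi> s t0 y) has_vector_derivative f t (\<phi> t t0 y)) (at t within {t0..t0 + min \<epsilon> r})"
      using flow_I[OF \<open>y \<in> U\<close>] by (simp add: I_def)
  next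
    fix t z assume "t \<in> {t0..t0 + min \<epsilon> r}" "z \<in> cball x (2 * r)"
    then have "(t, z) \<in> I \<times> C"
      by (simp add: I_def C_def)
    then show "norm (f t z) \<le> M" "norm (P t z) \<le> L"
      "(f t has_derivative blinfun_apply (P t z)) (at z within cball x (2 * r))"
      using M L deriv by (auto simp: C_def)
  next
    show "\<exists>\<delta>>0. \<forall>t\<in>{t0..t0 + min \<epsilon> r}. \<forall>z\<in>cball x (2 * r). \<forall>w\<in>cball x (2 * r). norm (z - w) < \<delta> \<longrightarrow>
        norm (f t z - f t w - P t w (z - w)) \<le> e * norm (z - w)" if "e > 0" for e
      using linearization[OF that] by (simp add: I_def C_def)
  qed (use \<open>\<epsilon> > 0\<close> \<open>r > 0\<close> \<open>\<eta> > 0\<close> \<open>L > 0\<close> A_cont in \<open>auto simp: I_def\<close>)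
  then show ?thesis
    by (simp add: P_def)
qed

lemma jacobian_eq_matrix:
  assumes "(g has_derivative blinfun_apply G) (at x)"
  shows "jacobian g (at x) = matrix (blinfun_apply G)"
  using frechet_derivative_at[OF assms] by (simp add: jacobian_def)

lemma matrix_blinfun_minus_id_scaleR:
  "matrix (blinfun_apply (G - id_blinfun - c *\<^sub>R H)) =
    matrix (blinfun_apply G) - mat 1 - c *\<^sub>R matrix (blinfun_apply H)"
  by (simp add: matrix_def mat_def vec_eq_iff axis_def blinfun.diff_left blinfun.scaleR_left)

theorem mainTheorem4:
  fixes f :: "real \<Rightarrow> real^3 \<Rightarrow> real^3"
    and \<phi> :: "real \<Rightarrow> real \<Rightarrow> real^3 \<Rightarrow> real^3"
    and D :: "(real \<times> (real^3)) set"
    and t0 :: real and x :: "real^3" and U :: "(real^3) set" and \<epsilon> :: real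
  assumes D_open: "open D"
    and f_C3: "C3_on D (\<lambda>(t, y). f t y)"
    and incompressible: "\<forall>(t, y)\<in>D. trace (jacobian (f t) (at y)) = 0"
    and base: "(t0, x) \<in> D"
    and det_nz: "det (jacobian (f t0) (at x)) \<noteq> 0"
    and U: "open U" "x \<in> U" and eps: "\<epsilon> > 0"
    and flow: "\<forall>y\<in>U. \<phi> t0 t0 y = y \<and>
        (\<forall>t\<in>{t0..t0+\<epsilon>}. (t, \<phi> t t0 y) \<in> D \<and>
           ((\<lambda>s. \<phi> s t0 y) has_vector_derivative f t (\<phi> t t0 y)) (at t within {t0..t0+\<epsilon>}))"
  shows "\<exists>Tmin>0. \<forall>T. 0 < T \<and> T < Tmin \<longrightarrow>
           time_map \<phi> t0 T differentiable (at x) \<and> mesohyperbolic \<phi> t0 T x"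
proof -
  obtain F' where F': "\<And>z. z \<in> D \<Longrightarrow> ((\<lambda>(t, y). f t y) has_derivative blinfun_apply (F' z)) (at z)"
    and "C2_on D F'"
    using f_C3 unfolding C3_on_def by blast
  then obtain F'' where "\<And>z. z \<in> D \<Longrightarrow> (F' has_derivative blinfun_apply (F'' z)) (at z)"
    unfolding C2_on_def by blast
  then have F'_cont: "continuous_on D F'"
    by (rule continuous_on_if_has_derivative_at)
  define P0 where "P0 = F' (t0, x) o\<^sub>L embed_snd"
  define A where "A = jacobian (f t0) (at x)"
  have A: "A = matrix (blinfun_apply P0)"
    unfolding A_def P0_def by (rule jacobian_eq_matrix[OF partial_derivative_snd[OF F'[OF base]]])
  have "trace A = 0"
    using incompressible base by (auto simp: A_def)
  then have "\<forall>\<omega>. \<not> is_eigenvalue A (\<i> * of_real \<omega>)"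
    using det_nz by (simp add: A_def no_imaginary_eigenvalue_if_trace_zero)
  then obtain \<eta> where "\<eta> > 0" and no_unit: "\<forall>\<^sub>F T in at_right 0. \<forall>M.
      matrix_l1_norm (M - mat 1 - T *\<^sub>R A) \<le> \<eta> * T \<longrightarrow> (\<forall>c. is_eigenvalue M c \<longrightarrow> cmod c \<noteq> 1)"
    using eventually_no_unit_eigenvalue by blast
  have "\<forall>\<^sub>F T in at_right 0. \<exists>Y. (time_map \<phi> t0 T has_derivative blinfun_apply Y) (at x) \<and>
      norm (Y - id_blinfun - T *\<^sub>R P0) \<le> \<eta> / 9 * T"
    unfolding P0_def using \<open>\<eta> > 0\<close>
    by (intro eventually_time_map_derivative[where f = f and F' = F' and D = D and \<phi> = \<phi>,
          OF D_open F'_cont F' base U eps flow]) auto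
  with no_unit have "\<forall>\<^sub>F T in at_right 0. time_map \<phi> t0 T differentiable (at x) \<and> mesohyperbolic \<phi> t0 T x"
  proof eventually_elim
    case (elim T)
    then obtain Y where Y: "(time_map \<phi> t0 T has_derivative blinfun_apply Y) (at x)"
      and "norm (Y - id_blinfun - T *\<^sub>R P0) \<le> \<eta> / 9 * T"
      by blast
    then have "matrix_l1_norm (jacobian (time_map \<phi> t0 T) (at x) - mat 1 - T *\<^sub>R A) \<le> \<eta> * T"
      using matrix_l1_norm_le_norm_blinfun[of "Y - id_blinfun - T *\<^sub>R P0"]
      by (simp add: jacobian_eq_matrix[OF Y] A matrix_blinfun_minus_id_scaleR)
    then show ?case
      using elim Y unfolding mesohyperbolic_def differentiable_def by blast
  qed
  then show ?thesis
    unfolding eventually_at_right_field by auto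
qed

end
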